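(* Let $N=[n]$, let $v:2^N\to\mathbb{R}_+$ be any monotone valuation with $v(\emptyset)=0$, let $c\in\mathbb{R}^n_+$ be a vector of service costs, and let $X$ be an up-consistent decision map for $v$. Then for every $\epsilon>0$ there exists an $\epsilon$-Nash equilibrium $p$ of the pricing game with costs defined by $v$, $c$ and $X$ such that $X(p)=X(c)$.
   Context: Pricing game with service costs: $N=[n]$ services, service $i$ controlled by seller $i$, who has cost $c_i\ge0$ for providing it. Buyer valuation $v:2^N\to\mathbb{R}_+$, monotone, $v(\emptyset)=0$. For $p\in\mathbb{R}^n_+$, $p(S)=\sum_{j\in S}p_j$, $D(v;p)=\arg\max_{S\subseteq N}(v(S)-p(S))$. A decision map is $X:\mathbb{R}^n_+\to2^N$ with $X(p)\in D(v;p)$ for all $p$. $X$ is up-consistent if for every $p$ with $X(p)=S$, every $i$ and every $p_i'>p_i$, either $X(p_i',p_{-i})=S$ or $i\notin X(p_i',p_{-i})$. Seller $i$'s utility is $u_i(p)=(p_i-c_i)\mathbf{1}\{i\in X(p)\}$. An $\epsilon$-Nash equilibrium is a $p\in\mathbb{R}^n_+$ with $u_i(p)\ge u_i(p_i',p_{-i})-\epsilon$ for all $i$ and $p_i'\in\mathbb{R}_+$. *)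

theory Defs
  imports "HOL-Analysis.Analysis"
begin

text \<open>Services are N = {..<n}. A price vector in R^n_+ is represented as a function
  nat => real that is nonnegative on N and zero outside N (canonical representative).\<close>

definition price_vecs :: "nat \<Rightarrow> (nat \<Rightarrow> real) set" where
  "price_vecs n = {p. (\<forall>i<n. 0 \<le> p i) \<and> (\<forall>i\<ge>n. p i = 0)}"

definition price_of :: "(nat \<Rightarrow> real) \<Rightarrow> nat set \<Rightarrow> real" where
  "price_of p S = (\<Sum>j\<in>S. p j)"

definition valuation :: "nat \<Rightarrow> (nat set \<Rightarrow> real) \<Rightarrow> bool" where
  "valuation n v \<longleftrightarrow> v {} = 0 \<and> (\<forall>S. S \<subseteq> {..<n} \<longrightarrow> 0 \<le> v S)
     \<and> (\<forall>S T. S \<subseteq> T \<and> T \<subseteq> {..<n} \<longrightarrow> v S \<le> v T)"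

definition demand :: "nat \<Rightarrow> (nat set \<Rightarrow> real) \<Rightarrow> (nat \<Rightarrow> real) \<Rightarrow> nat set set" where
  "demand n v p = {S. S \<subseteq> {..<n} \<and>
     (\<forall>T. T \<subseteq> {..<n} \<longrightarrow> v T - price_of p T \<le> v S - price_of p S)}"

definition decision_map :: "nat \<Rightarrow> (nat set \<Rightarrow> real) \<Rightarrow> ((nat \<Rightarrow> real) \<Rightarrow> nat set) \<Rightarrow> bool" where
  "decision_map n v X \<longleftrightarrow> (\<forall>p\<in>price_vecs n. X p \<in> demand n v p)"

definition up_consistent :: "nat \<Rightarrow> ((nat \<Rightarrow> real) \<Rightarrow> nat set) \<Rightarrow> bool" where
  "up_consistent n X \<longleftrightarrow> (\<forall>p\<in>price_vecs n. \<forall>i<n. \<forall>q. q > p i \<longrightarrow>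
     X (p(i := q)) = X p \<or> i \<notin> X (p(i := q)))"

definition seller_utility :: "(nat \<Rightarrow> real) \<Rightarrow> ((nat \<Rightarrow> real) \<Rightarrow> nat set) \<Rightarrow> nat \<Rightarrow> (nat \<Rightarrow> real) \<Rightarrow> real" where
  "seller_utility c X i p = (if i \<in> X p then p i - c i else 0)"

definition eps_nash :: "nat \<Rightarrow> (nat \<Rightarrow> real) \<Rightarrow> ((nat \<Rightarrow> real) \<Rightarrow> nat set) \<Rightarrow> real \<Rightarrow> (nat \<Rightarrow> real) \<Rightarrow> bool" where
  "eps_nash n c X \<epsilon> p \<longleftrightarrow> p \<in> price_vecs n \<and>
     (\<forall>i<n. \<forall>q\<ge>0. seller_utility c X i p \<ge> seller_utility c X i (p(i := q)) - \<epsilon>)"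

end

theory Submission
  imports Defs
begin

text \<open>Let S = X(c). Among the price vectors that agree with c outside S, are at least c on S and
  still make the buyer choose S, the revenue p(S) is bounded by v(S), because S stays in demand
  and the empty bundle gives surplus 0. Take such a p whose revenue is within \<epsilon> of the
  supremum. A seller in S who raises her price by more than \<epsilon> and is still bought from
  produces, by up-consistency, another vector of the family with revenue above the supremum;
  lowering only loses. A seller outside S is paid c i, so she is never bought from at a higher
  price (up-consistency) and earns a negative margin at a lower one.\<close>

lemma price_of_fun_upd:
  assumes "finite S" "i \<in> S"
  shows "price_of (p(i := q)) S = price_of p S - p i + q"
proof -
  have "price_of (p(i := q)) S = q + sum p (S - {i})"
    unfolding price_of_def using assms by (simp add: sum.remove)
  also have "sum p (S - {i}) = price_of p S - p i"
    unfolding price_of_def using assms by (simp add: sum.remove)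
  finally show ?thesis by linarith
qed

lemma price_of_le_value_if_demanded:
  assumes "valuation n v" "S \<in> demand n v p"
  shows "price_of p S \<le> v S"
proof -
  have "v {} - price_of p {} \<le> v S - price_of p S"
    using assms(2) unfolding demand_def by auto
  then show ?thesis using assms(1) unfolding valuation_def price_of_def by simp
qed

lemma exists_near_Sup:
  fixes f :: "'a \<Rightarrow> real"
  assumes "x \<in> A" "\<And>y. y \<in> A \<Longrightarrow> f y \<le> B" "\<epsilon> > 0"
  obtains p where "p \<in> A" "\<And>y. y \<in> A \<Longrightarrow> f y < f p + \<epsilon>"
proof -
  let ?M = "Sup (f ` A)"
  have bdd: "bdd_above (f ` A)" using assms(2) by (intro bdd_aboveI[of _ B]) auto
  obtain z where "z \<in> f ` A" "?M - \<epsilon> < z"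
    using less_cSupE[of "?M - \<epsilon>" "f ` A"] assms(1,3) by auto
  then obtain p where "p \<in> A" "?M - \<epsilon> < f p" by auto
  moreover have "f y \<le> ?M" if "y \<in> A" for y using bdd that by (auto intro: cSup_upper)
  ultimately show ?thesis using that by fastforce
qed

lemma up_consistentD:
  assumes "up_consistent n X" "p \<in> price_vecs n" "i < n" "q > p i"
  shows "X (p(i := q)) = X p \<or> i \<notin> X (p(i := q))"
  using assms unfolding up_consistent_def by blast

definition markup_prices ::
    "nat \<Rightarrow> (nat \<Rightarrow> real) \<Rightarrow> ((nat \<Rightarrow> real) \<Rightarrow> nat set) \<Rightarrow> nat set \<Rightarrow> (nat \<Rightarrow> real) set" where
  "markup_prices n c X S =
     {p \<in> price_vecs n. (\<forall>i. i \<notin> S \<longrightarrow> p i = c i) \<and> (\<forall>i\<in>S. c i \<le> p i) \<and> X p = S}"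

lemma unchosen_seller_at_cost_no_gain:
  assumes "up_consistent n X" "p \<in> price_vecs n" "i < n" "i \<notin> X p" "p i = c i"
  shows "seller_utility c X i (p(i := q)) \<le> seller_utility c X i p"
proof (cases "i \<in> X (p(i := q))")
  case True
  have "\<not> q > p i" using True assms(4) up_consistentD[OF assms(1-3)] by auto
  moreover have "q \<noteq> p i" using True assms(4) by auto
  ultimately show ?thesis using True assms(4,5) unfolding seller_utility_def by simp
qed (use assms(4) in \<open>simp add: seller_utility_def\<close>)

lemma chosen_seller_eps_no_gain:
  assumes "up_consistent n X" "P = markup_prices n c X S" "finite S"
    and "p \<in> P" "\<And>r. r \<in> P \<Longrightarrow> price_of r S < price_of p S + \<epsilon>" "\<epsilon> > 0"
    and "i < n" "i \<in> S" "q \<ge> 0"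
  shows "seller_utility c X i (p(i := q)) \<le> seller_utility c X i p + \<epsilon>"
proof -
  have pv: "p \<in> price_vecs n" and p_off: "\<And>j. j \<notin> S \<Longrightarrow> p j = c j"
    and p_on: "\<And>j. j \<in> S \<Longrightarrow> c j \<le> p j" and pX: "X p = S"
    using assms(2,4) unfolding markup_prices_def by auto
  have u: "seller_utility c X i p = p i - c i"
    using assms(8) pX unfolding seller_utility_def by simp
  show ?thesis
  proof (cases "i \<in> X (p(i := q))")
    case chosen: True
    have "q \<le> p i + \<epsilon>"
    proof (rule ccontr)
      assume "\<not> q \<le> p i + \<epsilon>"
      then have raised: "q > p i + \<epsilon>" by simp
      then have "p i < q" using assms(6) by simp
      then have "X (p(i := q)) = S"
        using up_consistentD[OF assms(1) pv assms(7)] chosen pX by blast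
      moreover have "p(i := q) \<in> price_vecs n"
        using pv assms(7,9) unfolding price_vecs_def by auto
      moreover have "c j \<le> (p(i := q)) j" if "j \<in> S" for j
        using p_on[OF that] p_on[OF assms(8)] raised assms(6) by auto
      ultimately have "p(i := q) \<in> P"
        using assms(2,8) p_off unfolding markup_prices_def by auto
      then have "price_of (p(i := q)) S < price_of p S + \<epsilon>" by (rule assms(5))
      then show False using price_of_fun_upd[OF assms(3,8)] raised by simp
    qed
    then show ?thesis using chosen u unfolding seller_utility_def by simp
  next
    case False
    then show ?thesis using u p_on[OF assms(8)] assms(6) unfolding seller_utility_def by simp
  qed
qed

theorem mainTheorem11:
  fixes n :: nat and v :: "nat set \<Rightarrow> real" and c :: "nat \<Rightarrow> real"
    and X :: "(nat \<Rightarrow> real) \<Rightarrow> nat set" and \<epsilon> :: real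
  assumes "valuation n v"
    and "c \<in> price_vecs n"
    and "decision_map n v X"
    and "up_consistent n X"
    and "\<epsilon> > 0"
  shows "\<exists>p. eps_nash n c X \<epsilon> p \<and> X p = X c"
proof -
  define S where "S = X c"
  define P where "P = markup_prices n c X S"
  have "S \<in> demand n v c" using assms(2,3) unfolding S_def decision_map_def by auto
  then have "finite S" unfolding demand_def using finite_subset by blast
  have "c \<in> P" using assms(2) unfolding P_def S_def markup_prices_def by auto
  moreover have "price_of r S \<le> v S" if "r \<in> P" for r
    using that assms(1,3) price_of_le_value_if_demanded
    unfolding P_def markup_prices_def decision_map_def by fastforce
  ultimately obtain p where p: "p \<in> P"
    and near_max: "\<And>r. r \<in> P \<Longrightarrow> price_of r S < price_of p S + \<epsilon>"
    using exists_near_Sup[of c P "\<lambda>r. price_of r S" "v S" \<epsilon>] assms(5) by blast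
  have pv: "p \<in> price_vecs n" and pX: "X p = S" and p_off: "\<And>i. i \<notin> S \<Longrightarrow> p i = c i"
    using p unfolding P_def markup_prices_def by auto
  have "seller_utility c X i (p(i := q)) - \<epsilon> \<le> seller_utility c X i p"
    if "i < n" "q \<ge> 0" for i q
  proof (cases "i \<in> S")
    case True
    show ?thesis
      using chosen_seller_eps_no_gain[OF assms(4) P_def \<open>finite S\<close> p near_max assms(5) that(1) True that(2)]
      by linarith
  next
    case False
    then have "seller_utility c X i (p(i := q)) \<le> seller_utility c X i p"
      using unchosen_seller_at_cost_no_gain[OF assms(4) pv that(1)] pX p_off by simp
    with assms(5) show ?thesis by linarith
  qed
  then show ?thesis using pv pX unfolding eps_nash_def S_def by blast
qed

end
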